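(* Let $H\in(0,1)$, $\delta\in(0,H)$, $\rho>0$, let $B^H$ be a fractional Brownian motion on $[0,1]$ with Hurst index $H$, let $n\ge1$, and suppose $\mathbf{B}^H_n$ satisfies the BCE condition. Then for all $m\ge1$, $1\le k\le 2^{n+m-1}$ and $\theta>0$, $$\Xi^{(m,k)}_n(\theta)\le\exp\Bigl\{\tfrac12\bigl(\rho\,\ell_{n+m}\,\theta+\theta^2\,2^{-2(n+m)H}\bigr)\Bigr\}.$$
   Context: A fractional Brownian motion with Hurst index $H$ is a centered Gaussian process with $B^H(0)=0$ and covariance $\mathbb{E}[B^H(s)B^H(t)]=\tfrac12(|s|^{2H}+|t|^{2H}-|s-t|^{2H})$. $t^n_i=i/2^n$, $\ell_k=2^{-(H-\delta)k}$, $\mathbf{B}^H_n=(B^H(t^n_0),\dots,B^H(t^n_{2^n}))$, $\boldsymbol\alpha_n(m,k)=(B^H(t^{n+m}_{2k-2}),B^H(t^{n+m}_{2k-1}),B^H(t^{n+m}_{2k}))^\top$, $\boldsymbol\beta=(1/2,-1,1/2)^\top$, $\mu_n(m,k)=\boldsymbol\beta^\top\mathbb{E}[\boldsymbol\alpha_n(m,k)\mid\mathbf{B}^H_n]$, $\Xi^{(m,k)}_n(\theta)=\mathbb{E}[\exp\{\theta\boldsymbol\beta^\top\boldsymbol\alpha_n(m,k)\}\mid\mathbf{B}^H_n]$. BCE condition: $|\mu_n(m,k)|\le\tfrac{\rho}{2}\ell_{n+m}$ for all $m\ge1$, $1\le k\le2^{n+m-1}$. *)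

theory Defs
  imports "HOL-Probability.Probability" "HOL-Probability.Conditional_Expectation"
begin

definition gaussian_rv :: "'a measure \<Rightarrow> ('a \<Rightarrow> real) \<Rightarrow> bool" where
  "gaussian_rv M X \<longleftrightarrow> X \<in> borel_measurable M \<and>
     ((\<exists>c. AE \<omega> in M. X \<omega> = c) \<or>
      (\<exists>\<mu> \<sigma>. \<sigma> > 0 \<and> distributed M lborel X (normal_density \<mu> \<sigma>)))"

definition fbm_on_unit :: "'a measure \<Rightarrow> real \<Rightarrow> (real \<Rightarrow> 'a \<Rightarrow> real) \<Rightarrow> bool" where
  "fbm_on_unit M H B \<longleftrightarrow> prob_space M \<and>
     (\<forall>t\<in>{0..1}. B t \<in> borel_measurable M) \<and>
     (AE \<omega> in M. B 0 \<omega> = 0) \<and>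
     (\<forall>S c. finite S \<and> S \<subseteq> {0..1} \<longrightarrow> gaussian_rv M (\<lambda>\<omega>. \<Sum>t\<in>S. c t * B t \<omega>)) \<and>
     (\<forall>t\<in>{0..1}. integrable M (B t) \<and> integral\<^sup>L M (B t) = 0) \<and>
     (\<forall>s\<in>{0..1}. \<forall>t\<in>{0..1}. integrable M (\<lambda>\<omega>. B s \<omega> * B t \<omega>) \<and>
        integral\<^sup>L M (\<lambda>\<omega>. B s \<omega> * B t \<omega>) =
          (\<bar>s\<bar> powr (2*H) + \<bar>t\<bar> powr (2*H) - \<bar>s - t\<bar> powr (2*H)) / 2)"

definition dyadic :: "nat \<Rightarrow> nat \<Rightarrow> real" where
  "dyadic n i = real i / 2 ^ n"

definition ell :: "real \<Rightarrow> real \<Rightarrow> nat \<Rightarrow> real" where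
  "ell H \<delta> k = 2 powr (- (H - \<delta>) * real k)"

definition gen_sigma :: "'a measure \<Rightarrow> (real \<Rightarrow> 'a \<Rightarrow> real) \<Rightarrow> nat \<Rightarrow> 'a measure" where
  "gen_sigma M B n = sigma (space M)
     {B (dyadic n i) -` A \<inter> space M | i A. i \<le> 2 ^ n \<and> A \<in> sets borel}"

definition mu_cond :: "'a measure \<Rightarrow> (real \<Rightarrow> 'a \<Rightarrow> real) \<Rightarrow> nat \<Rightarrow> nat \<Rightarrow> nat \<Rightarrow> 'a \<Rightarrow> real" where
  "mu_cond M B n m k \<omega> =
     1/2 * real_cond_exp M (gen_sigma M B n) (B (dyadic (n+m) (2*k-2))) \<omega>
     - real_cond_exp M (gen_sigma M B n) (B (dyadic (n+m) (2*k-1))) \<omega>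
     + 1/2 * real_cond_exp M (gen_sigma M B n) (B (dyadic (n+m) (2*k))) \<omega>"

definition Xi :: "'a measure \<Rightarrow> (real \<Rightarrow> 'a \<Rightarrow> real) \<Rightarrow> nat \<Rightarrow> nat \<Rightarrow> nat \<Rightarrow> real \<Rightarrow> 'a \<Rightarrow> real" where
  "Xi M B n m k \<theta> \<omega> = real_cond_exp M (gen_sigma M B n)
     (\<lambda>\<omega>. exp (\<theta> * (1/2 * B (dyadic (n+m) (2*k-2)) \<omega> - B (dyadic (n+m) (2*k-1)) \<omega>
                      + 1/2 * B (dyadic (n+m) (2*k)) \<omega>))) \<omega>"

definition BCE :: "'a measure \<Rightarrow> (real \<Rightarrow> 'a \<Rightarrow> real) \<Rightarrow> real \<Rightarrow> real \<Rightarrow> real \<Rightarrow> nat \<Rightarrow> 'a \<Rightarrow> bool" where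
  "BCE M B H \<delta> \<rho> n \<omega> \<longleftrightarrow>
     (\<forall>m k. 1 \<le> m \<and> 1 \<le> k \<and> k \<le> 2 ^ (n+m-1) \<longrightarrow>
        \<bar>mu_cond M B n m k \<omega>\<bar> \<le> \<rho> / 2 * ell H \<delta> (n+m))"

end

theory Submission
  imports Defs
begin

text \<open>Let X be the second difference beta^T alpha_n(m,k). In the Gaussian space spanned by B,
  project X orthogonally onto the span of the conditioning values B(t^n_i): X = L + Y, where L is
  measurable with respect to the sigma-algebra generated by these values and Y is uncorrelated
  with each of them. Jointly Gaussian uncorrelated variables are independent, so
  mu_n(m,k) = E[X | B_n] = L and
  Xi(theta) = exp(theta L) E exp(theta Y) = exp(theta mu_n(m,k) + theta^2 Var Y / 2).
  Finally Var Y \<le> Var X = h^(2H) - (2h)^(2H) / 4 \<le> h^(2H) for h = 2^-(n+m), and the BCE condition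
  bounds mu_n(m,k).

  The independence is proved with the uniqueness theorem for moment generating functions (via
  moments, characteristic functions and Levy's uniqueness theorem), applied one coordinate at a
  time to turn exponential test functions into indicators.\<close>

section \<open>Moment generating functions determine finite measures on the line\<close>

lemma powser_coeffs_eq_zero:
  fixes a :: "nat \<Rightarrow> real"
  assumes sums_zero: "\<And>x. (\<lambda>n. a n * x ^ n) sums 0"
  shows "a k = 0"
proof (induction k rule: less_induct)
  case (less k)
  have "(\<lambda>n. a (n + k) * x ^ n) sums 0" if "x \<noteq> 0" for x
  proof -
    have "(\<lambda>n. a (n + k) * x ^ (n + k)) sums 0"
      using sums_zero[of x] sums_iff_shift[of "\<lambda>n. a n * x ^ n" k 0] less by simp
    then have "(\<lambda>n. a (n + k) * x ^ (n + k) / x ^ k) sums 0"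
      using sums_divide by fastforce
    then show ?thesis
      using that by (simp add: power_add)
  qed
  then have "((\<lambda>x::real. 0) \<longlongrightarrow> a k) (at 0)"
    using powser_limit_0_strong[of 1 "\<lambda>n. a (n + k)" "\<lambda>_. 0"] by simp
  then show "a k = 0"
    using LIM_unique tendsto_const by blast
qed

lemma sum_exp_series_le_exp:
  fixes y :: real
  assumes "0 \<le> y"
  shows "(\<Sum>k\<le>n. y ^ k / fact k) \<le> exp y"
proof -
  have "(\<Sum>k\<le>n. y ^ k /\<^sub>R fact k) \<le> (\<Sum>k. y ^ k /\<^sub>R fact k)"
    using assms exp_converges[of y] by (intro sum_le_suminf) (auto dest: sums_summable)
  then show ?thesis
    by (simp add: exp_def divide_inverse mult.commute)
qed

lemma abs_power_le_fact_exp: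
  fixes x :: real
  shows "\<bar>x\<bar> ^ k \<le> fact k * (exp x + exp (- x))"
proof -
  have "\<bar>x\<bar> ^ k / fact k \<le> (\<Sum>j\<le>k. \<bar>x\<bar> ^ j / fact j)"
    by (rule member_le_sum) auto
  also have "\<dots> \<le> exp \<bar>x\<bar>"
    by (rule sum_exp_series_le_exp) simp
  also have "\<dots> \<le> exp x + exp (- x)"
    by (cases "x \<ge> 0") (simp_all add: add_increasing add_increasing2)
  finally show ?thesis
    by (simp add: divide_le_eq mult.commute)
qed

context
  fixes M :: "real measure"
  assumes sets_M: "sets M = sets borel"
    and integrable_exp: "\<And>s. integrable M (\<lambda>x. exp (s * x))"
begin

lemma integrable_power_of_integrable_exp: "integrable M (\<lambda>x. x ^ k)"
proof (rule Bochner_Integration.integrable_bound)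
  show "integrable M (\<lambda>x. fact k * (exp x + exp (- x)))"
    using integrable_exp[of 1] integrable_exp[of "-1"] by simp
  show "(\<lambda>x. x ^ k) \<in> borel_measurable M"
    unfolding measurable_cong_sets[OF sets_M refl] by measurable
  show "AE x in M. norm (x ^ k) \<le> norm (fact k * (exp x + exp (- x)))"
    using abs_power_le_fact_exp[of _ k] by (simp add: power_abs abs_mult add_nonneg_nonneg)
qed

lemma moment_series_tendsto_exp_integral:
  fixes z :: complex
  shows "(\<lambda>n. \<Sum>k\<le>n. z ^ k / fact k * complex_of_real (\<integral>x. x ^ k \<partial>M))
           \<longlonglongrightarrow> (CLINT x|M. exp (z * complex_of_real x))"
proof -
  define s where "s n x = (\<Sum>k\<le>n. (z * complex_of_real x) ^ k / fact k)" for n x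
  define w where "w x = exp (cmod z * x) + exp (- cmod z * x)" for x
  have "(\<lambda>n. integral\<^sup>L M (s n)) \<longlonglongrightarrow> (CLINT x|M. exp (z * complex_of_real x))"
  proof (rule integral_dominated_convergence)
    show "(\<lambda>x. exp (z * complex_of_real x)) \<in> borel_measurable M"
      unfolding measurable_cong_sets[OF sets_M refl] by measurable
    show "s n \<in> borel_measurable M" for n
      unfolding measurable_cong_sets[OF sets_M refl] s_def by measurable
    show "integrable M w"
      unfolding w_def using integrable_exp[of "cmod z"] integrable_exp[of "- cmod z"] by simp
    show "AE x in M. (\<lambda>n. s n x) \<longlonglongrightarrow> exp (z * complex_of_real x)"
    proof (rule AE_I2)
      fix x
      show "(\<lambda>n. s n x) \<longlonglongrightarrow> exp (z * complex_of_real x)"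
        using exp_converges[of "z * complex_of_real x"]
        unfolding sums_def_le s_def by (simp add: scaleR_conv_of_real divide_inverse mult.commute)
    qed
    show "AE x in M. norm (s n x) \<le> w x" for n
    proof (rule AE_I2)
      fix x
      have "norm (s n x) \<le> (\<Sum>k\<le>n. norm ((z * complex_of_real x) ^ k / fact k))"
        unfolding s_def by (rule norm_sum)
      also have "\<dots> = (\<Sum>k\<le>n. (cmod z * \<bar>x\<bar>) ^ k / fact k)"
        by (simp add: norm_divide norm_mult norm_power)
      also have "\<dots> \<le> exp (cmod z * \<bar>x\<bar>)"
        by (rule sum_exp_series_le_exp) simp
      also have "\<dots> \<le> w x"
        unfolding w_def by (cases "x \<ge> 0") (simp_all add: add_increasing add_increasing2)
      finally show "norm (s n x) \<le> w x" .
    qed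
  qed
  moreover have "integral\<^sup>L M (s n) = (\<Sum>k\<le>n. z ^ k / fact k * complex_of_real (\<integral>x. x ^ k \<partial>M))" for n
  proof -
    have "s n = (\<lambda>x. \<Sum>k\<le>n. z ^ k / fact k * complex_of_real (x ^ k))"
      unfolding s_def by (simp add: power_mult_distrib)
    moreover have "integrable M (\<lambda>x. z ^ k / fact k * complex_of_real (x ^ k))" for k
      by (intro integrable_mult_right integrable_of_real integrable_power_of_integrable_exp)
    ultimately show ?thesis
      by (simp only: Bochner_Integration.integral_sum integral_mult_right_zero integral_complex_of_real)
  qed
  ultimately show ?thesis
    by simp
qed

end

text \<open>An everywhere finite moment generating function is the exponential generating function of the
  moments, so it determines them; the characteristic function is the same series at \<open>i t\<close>.\<close>

lemma real_distribution_eq_of_mgf_eq: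
  fixes M N :: "real measure"
  assumes "real_distribution M" "real_distribution N"
    and integrable_M: "\<And>s. integrable M (\<lambda>x. exp (s * x))"
    and integrable_N: "\<And>s. integrable N (\<lambda>x. exp (s * x))"
    and mgf_eq: "\<And>s. (\<integral>x. exp (s * x) \<partial>M) = (\<integral>x. exp (s * x) \<partial>N)"
  shows "M = N"
proof -
  interpret M: real_distribution M by fact
  interpret N: real_distribution N by fact
  note series_M = moment_series_tendsto_exp_integral[OF M.events_eq_borel integrable_M]
  note series_N = moment_series_tendsto_exp_integral[OF N.events_eq_borel integrable_N]
  have moments_eq: "(\<integral>x. x ^ k \<partial>M) = (\<integral>x. x ^ k \<partial>N)" for k
  proof -
    define a where "a k = ((\<integral>x. x ^ k \<partial>M) - (\<integral>x. x ^ k \<partial>N)) / fact k" for k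
    have "(\<lambda>k. a k * x ^ k) sums 0" for x :: real
    proof -
      have exp_of_real: "(CLINT y|L. exp (complex_of_real x * complex_of_real y)) = complex_of_real (\<integral>y. exp (x * y) \<partial>L)"
        for L :: "real measure"
        by (simp only: of_real_mult[symmetric] exp_of_real integral_complex_of_real)
      have "(\<lambda>n. (\<Sum>k\<le>n. complex_of_real x ^ k / fact k * complex_of_real (\<integral>y. y ^ k \<partial>M))
            - (\<Sum>k\<le>n. complex_of_real x ^ k / fact k * complex_of_real (\<integral>y. y ^ k \<partial>N)))
          \<longlonglongrightarrow> complex_of_real (\<integral>y. exp (x * y) \<partial>M) - complex_of_real (\<integral>y. exp (x * y) \<partial>N)"
        using tendsto_diff[OF series_M[of "complex_of_real x"] series_N[of "complex_of_real x"]]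
        unfolding exp_of_real .
      moreover have "(\<Sum>k\<le>n. complex_of_real x ^ k / fact k * complex_of_real (\<integral>y. y ^ k \<partial>M))
            - (\<Sum>k\<le>n. complex_of_real x ^ k / fact k * complex_of_real (\<integral>y. y ^ k \<partial>N))
          = complex_of_real (\<Sum>k\<le>n. a k * x ^ k)" for n
        by (simp add: a_def sum_subtractf[symmetric] field_simps)
      ultimately have "(\<lambda>n. complex_of_real (\<Sum>k\<le>n. a k * x ^ k)) \<longlonglongrightarrow> complex_of_real 0"
        using mgf_eq[of x] by simp
      then show ?thesis
        unfolding sums_def_le tendsto_of_real_iff .
    qed
    then have "a k = 0"
      by (rule powser_coeffs_eq_zero)
    then show ?thesis
      by (simp add: a_def)
  qed
  have "char M = char N"
  proof
    fix t
    have "char L t = (CLINT x|L. exp ((\<i> * complex_of_real t) * complex_of_real x))" for L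
      unfolding char_def by (simp add: mult.assoc)
    then show "char M t = char N t"
      using series_M[of "\<i> * complex_of_real t"] series_N[of "\<i> * complex_of_real t"]
      unfolding moments_eq by (metis LIMSEQ_unique)
  qed
  then show ?thesis
    by (rule Levy_uniqueness[OF assms(1,2)])
qed

lemma real_distribution_scale_measure:
  fixes L :: "real measure"
  assumes "sets L = sets borel" "emeasure L UNIV = ennreal r" "0 < r"
  shows "real_distribution (scale_measure (1 / r) L)"
proof -
  have "prob_space (scale_measure (1 / r) L)"
    using assms sets_eq_imp_space_eq[OF assms(1)]
    by (intro prob_spaceI) (simp add: space_scale_measure ennreal_mult[symmetric])
  then show ?thesis
    using assms(1) by (simp add: real_distribution_def real_distribution_axioms_def)
qed

lemma finite_measure_eq_of_mgf_eq:
  fixes M N :: "real measure"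
  assumes sets_M: "sets M = sets borel" and sets_N: "sets N = sets borel"
    and mgf_finite: "\<And>s. (\<integral>\<^sup>+x. exp (s * x) \<partial>M) < \<infinity>"
    and mgf_eq: "\<And>s. (\<integral>\<^sup>+x. exp (s * x) \<partial>M) = (\<integral>\<^sup>+x. exp (s * x) \<partial>N)"
  shows "M = N"
proof -
  have space_M: "space M = UNIV" and space_N: "space N = UNIV"
    using sets_eq_imp_space_eq[OF sets_M] sets_eq_imp_space_eq[OF sets_N] by simp_all
  have exp_measurable: "(\<lambda>x. exp (s * x)) \<in> borel_measurable L" if "sets L = sets borel" for s and L :: "real measure"
    unfolding measurable_cong_sets[OF that refl] by measurable
  define c where "c = emeasure M UNIV"
  have mass_M: "emeasure M UNIV = c" and mass_N: "emeasure N UNIV = c"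
    using mgf_eq[of 0] by (simp_all add: c_def space_M space_N)
  have "c < \<infinity>"
    using mgf_finite[of 0] by (simp add: c_def space_M)
  show ?thesis
  proof (cases "c = 0")
    case True
    then show ?thesis
      using emeasure_mono[of _ UNIV M] emeasure_mono[of _ UNIV N] mass_M mass_N sets_M sets_N
      by (intro measure_eqI) (auto simp: space_M space_N)
  next
    case False
    define r where "r = enn2real c"
    have "0 < r" "c = ennreal r"
      using False \<open>c < \<infinity>\<close> by (auto simp: r_def enn2real_positive_iff less_top[symmetric] zero_less_iff_neq_zero)
    define normalize :: "real measure \<Rightarrow> real measure" where "normalize L = scale_measure (1 / r) L" for L
    have mgf_normalize: "(\<integral>\<^sup>+x. exp (s * x) \<partial>normalize L) = ennreal (1 / r) * (\<integral>\<^sup>+x. exp (s * x) \<partial>L)"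
      if "sets L = sets borel" for s and L :: "real measure"
      unfolding normalize_def using exp_measurable[OF that] by (simp add: nn_integral_scale_measure)
    have integrable: "integrable (normalize L) (\<lambda>x. exp (s * x))"
      if "sets L = sets borel" "\<And>s. (\<integral>\<^sup>+x. exp (s * x) \<partial>L) < \<infinity>" for s and L :: "real measure"
    proof -
      have "(\<integral>\<^sup>+x. exp (s * x) \<partial>normalize L) < \<infinity>"
        using mgf_normalize[OF that(1)] that(2)[of s] by (simp add: ennreal_mult_less_top)
      then show ?thesis
        using exp_measurable[of "normalize L"] that(1) by (intro integrableI_nonneg) (auto simp: normalize_def)
    qed
    have "normalize M = normalize N"
    proof (rule real_distribution_eq_of_mgf_eq)
      show "real_distribution (normalize M)" "real_distribution (normalize N)"
        unfolding normalize_def using sets_M sets_N mass_M mass_N \<open>0 < r\<close> \<open>c = ennreal r\<close>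
        by (simp_all add: real_distribution_scale_measure)
      show "integrable (normalize M) (\<lambda>x. exp (s * x))" "integrable (normalize N) (\<lambda>x. exp (s * x))" for s
        using integrable sets_M sets_N mgf_finite mgf_eq by metis+
      show "(\<integral>x. exp (s * x) \<partial>normalize M) = (\<integral>x. exp (s * x) \<partial>normalize N)" for s
      proof -
        have "(\<integral>x. exp (s * x) \<partial>normalize L) = enn2real (ennreal (1 / r) * (\<integral>\<^sup>+x. exp (s * x) \<partial>L))"
          if "sets L = sets borel" for L
          using that exp_measurable[of "normalize L" s] mgf_normalize[OF that, of s]
          by (simp add: integral_eq_nn_integral normalize_def)
        then show ?thesis
          using sets_M sets_N mgf_eq by simp
      qed
    qed
    then have "scale_measure r (normalize M) = scale_measure r (normalize N)"
      by simp
    then show ?thesis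
      using \<open>0 < r\<close> by (simp add: normalize_def ennreal_mult[symmetric])
  qed
qed

section \<open>Joint moment generating functions\<close>

text \<open>For \<open>K = {}\<close>
  the integral is a joint moment generating function, for \<open>K = I\<close> the mass of a cylinder set;
  \<open>nn_integral_mixed_weight_eq\<close> moves the coordinates from \<open>I - K\<close> to \<open>K\<close> one at a time.\<close>

definition mixed_weight ::
    "('i \<Rightarrow> 'a \<Rightarrow> real) \<Rightarrow> 'i set \<Rightarrow> ('a \<Rightarrow> ennreal) \<Rightarrow> 'i set \<Rightarrow> ('i \<Rightarrow> real set) \<Rightarrow> ('i \<Rightarrow> real) \<Rightarrow> 'a \<Rightarrow> ennreal"
  where "mixed_weight V I h K C s \<omega> =
    h \<omega> * (\<Prod>i\<in>K. indicator (C i) (V i \<omega>)) * ennreal (exp (\<Sum>i\<in>I - K. s i * V i \<omega>))"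

lemma mixed_weight_fun_upd:
  assumes "finite I" "j \<in> I - K"
  shows "mixed_weight V I h K C (s(j := t)) \<omega> = mixed_weight V I h K C (s(j := 0)) \<omega> * ennreal (exp (t * V j \<omega>))"
proof -
  have "(\<Sum>i\<in>I - K. (s(j := u)) i * V i \<omega>) = u * V j \<omega> + (\<Sum>i\<in>I - K - {j}. s i * V i \<omega>)" for u
  proof -
    have "(\<Sum>i\<in>I - K. (s(j := u)) i * V i \<omega>) = u * V j \<omega> + (\<Sum>i\<in>I - K - {j}. (s(j := u)) i * V i \<omega>)"
      using assms by (subst sum.remove[of _ j]) auto
    then show ?thesis
      by simp
  qed
  then show ?thesis
    unfolding mixed_weight_def by (simp add: exp_add ennreal_mult mult_ac)
qed

lemma mixed_weight_insert:
  assumes "finite I" "finite K" "j \<notin> K"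
  shows "mixed_weight V I h (insert j K) C s \<omega> = mixed_weight V I h K C (s(j := 0)) \<omega> * indicator (C j) (V j \<omega>)"
proof -
  have "(\<Sum>i\<in>I - K. (s(j := 0)) i * V i \<omega>) = (\<Sum>i\<in>I - insert j K. s i * V i \<omega>)"
    using assms(1) by (intro sum.mono_neutral_cong_right) auto
  then show ?thesis
    using assms(2,3) unfolding mixed_weight_def by (simp add: mult_ac)
qed

lemma mixed_weight_measurable:
  assumes V: "\<And>i. i \<in> I \<Longrightarrow> V i \<in> borel_measurable M" and [measurable]: "h \<in> borel_measurable M"
    and "K \<subseteq> I" and C: "\<And>i. i \<in> K \<Longrightarrow> C i \<in> sets borel"
  shows "mixed_weight V I h K C s \<in> borel_measurable M"
proof -
  have [measurable]: "(\<lambda>\<omega>. \<Prod>i\<in>K. indicator (C i) (V i \<omega>) :: ennreal) \<in> borel_measurable M"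
    using V C \<open>K \<subseteq> I\<close> by (intro borel_measurable_prod_ennreal) (simp add: subset_iff)
  have [measurable]: "(\<lambda>\<omega>. \<Sum>i\<in>I - K. s i * V i \<omega>) \<in> borel_measurable M"
    using V by (intro borel_measurable_sum borel_measurable_times) auto
  show ?thesis
    unfolding mixed_weight_def[abs_def] by measurable
qed

context
  fixes M :: "'a measure" and V :: "'i \<Rightarrow> 'a \<Rightarrow> real" and I :: "'i set" and h :: "'a \<Rightarrow> ennreal"
    and K :: "'i set" and C :: "'i \<Rightarrow> real set" and s :: "'i \<Rightarrow> real" and j :: 'i
  assumes V_measurable: "\<And>i. i \<in> I \<Longrightarrow> V i \<in> borel_measurable M"
    and h_measurable: "h \<in> borel_measurable M"
    and finite_I: "finite I" and K_subset: "K \<subseteq> I" and C_borel: "\<And>i. i \<in> K \<Longrightarrow> C i \<in> sets borel"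
    and j: "j \<in> I - K"
begin

abbreviation (input) law_under_mixed_weight :: "real measure"
  where "law_under_mixed_weight \<equiv> distr (density M (mixed_weight V I h K C (s(j := 0)))) borel (V j)"

lemma nn_integral_exp_law_under_mixed_weight:
  "(\<integral>\<^sup>+y. exp (t * y) \<partial>law_under_mixed_weight) = (\<integral>\<^sup>+\<omega>. mixed_weight V I h K C (s(j := t)) \<omega> \<partial>M)"
proof -
  have [measurable]: "V j \<in> borel_measurable M"
    using j V_measurable by blast
  have [measurable]: "mixed_weight V I h K C (s(j := 0)) \<in> borel_measurable M"
    using V_measurable h_measurable K_subset C_borel by (rule mixed_weight_measurable)
  have "(\<integral>\<^sup>+y. exp (t * y) \<partial>law_under_mixed_weight) =
      (\<integral>\<^sup>+\<omega>. mixed_weight V I h K C (s(j := 0)) \<omega> * ennreal (exp (t * V j \<omega>)) \<partial>M)"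
    by (simp add: nn_integral_distr nn_integral_density)
  also have "\<dots> = (\<integral>\<^sup>+\<omega>. mixed_weight V I h K C (s(j := t)) \<omega> \<partial>M)"
    by (rule nn_integral_cong) (rule mixed_weight_fun_upd[OF finite_I j, symmetric])
  finally show ?thesis .
qed

lemma emeasure_law_under_mixed_weight:
  assumes "C j \<in> sets borel"
  shows "emeasure law_under_mixed_weight (C j) = (\<integral>\<^sup>+\<omega>. mixed_weight V I h (insert j K) C s \<omega> \<partial>M)"
proof -
  have [measurable]: "V j \<in> borel_measurable M"
    using j V_measurable by blast
  have [measurable]: "mixed_weight V I h K C (s(j := 0)) \<in> borel_measurable M"
    using V_measurable h_measurable K_subset C_borel by (rule mixed_weight_measurable)
  have "emeasure law_under_mixed_weight (C j) =
      (\<integral>\<^sup>+\<omega>. mixed_weight V I h K C (s(j := 0)) \<omega> * indicator (V j -` C j \<inter> space M) \<omega> \<partial>M)"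
    using assms by (simp add: emeasure_distr emeasure_density)
  also have "\<dots> = (\<integral>\<^sup>+\<omega>. mixed_weight V I h K C (s(j := 0)) \<omega> * indicator (C j) (V j \<omega>) \<partial>M)"
    by (rule nn_integral_cong) (simp add: indicator_def)
  also have "\<dots> = (\<integral>\<^sup>+\<omega>. mixed_weight V I h (insert j K) C s \<omega> \<partial>M)"
    using j by (intro nn_integral_cong mixed_weight_insert[OF finite_I finite_subset[OF K_subset finite_I], symmetric]) auto
  finally show ?thesis .
qed

end

lemma nn_integral_mixed_weight_eq:
  fixes M :: "'a measure" and V :: "'i \<Rightarrow> 'a \<Rightarrow> real" and f g :: "'a \<Rightarrow> ennreal"
  assumes V_measurable: "\<And>i. i \<in> I \<Longrightarrow> V i \<in> borel_measurable M" and "finite I"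
    and f_measurable: "f \<in> borel_measurable M" and g_measurable: "g \<in> borel_measurable M"
    and mgf_eq: "\<And>s. (\<integral>\<^sup>+\<omega>. mixed_weight V I f {} C s \<omega> \<partial>M) = (\<integral>\<^sup>+\<omega>. mixed_weight V I g {} C s \<omega> \<partial>M)"
    and mgf_finite: "\<And>s. (\<integral>\<^sup>+\<omega>. mixed_weight V I f {} C s \<omega> \<partial>M) < \<infinity>"
    and "K \<subseteq> I" and "\<And>i. i \<in> K \<Longrightarrow> C i \<in> sets borel"
  shows "(\<integral>\<^sup>+\<omega>. mixed_weight V I f K C s \<omega> \<partial>M) = (\<integral>\<^sup>+\<omega>. mixed_weight V I g K C s \<omega> \<partial>M)
    \<and> (\<integral>\<^sup>+\<omega>. mixed_weight V I f K C s \<omega> \<partial>M) < \<infinity>"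
  using finite_subset[OF \<open>K \<subseteq> I\<close> \<open>finite I\<close>] \<open>K \<subseteq> I\<close> \<open>\<And>i. i \<in> K \<Longrightarrow> C i \<in> sets borel\<close>
proof (induction K arbitrary: s rule: finite_subset_induct')
  case empty
  then show ?case
    using mgf_eq mgf_finite by simp
next
  case (insert j K s)
  then have j: "j \<in> I - K" and C_borel: "\<And>i. i \<in> K \<Longrightarrow> C i \<in> sets borel" "C j \<in> sets borel"
    by auto
  have law_mgf: "(\<integral>\<^sup>+y. exp (t * y) \<partial>distr (density M (mixed_weight V I h K C (s(j := 0)))) borel (V j))
      = (\<integral>\<^sup>+\<omega>. mixed_weight V I h K C (s(j := t)) \<omega> \<partial>M)" if "h \<in> borel_measurable M" for h t
    by (rule nn_integral_exp_law_under_mixed_weight) (use V_measurable that \<open>finite I\<close> \<open>K \<subseteq> I\<close> C_borel j in auto)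
  have law_emeasure: "emeasure (distr (density M (mixed_weight V I h K C (s(j := 0)))) borel (V j)) (C j)
      = (\<integral>\<^sup>+\<omega>. mixed_weight V I h (insert j K) C s \<omega> \<partial>M)" if "h \<in> borel_measurable M" for h
    by (rule emeasure_law_under_mixed_weight) (use V_measurable that \<open>finite I\<close> \<open>K \<subseteq> I\<close> C_borel j in auto)
  have laws_eq: "distr (density M (mixed_weight V I f K C (s(j := 0)))) borel (V j)
      = distr (density M (mixed_weight V I g K C (s(j := 0)))) borel (V j)"
  proof (rule finite_measure_eq_of_mgf_eq)
    fix t
    show "(\<integral>\<^sup>+y. exp (t * y) \<partial>distr (density M (mixed_weight V I f K C (s(j := 0)))) borel (V j)) < \<infinity>"
      unfolding law_mgf[OF f_measurable] using insert.IH C_borel by blast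
    show "(\<integral>\<^sup>+y. exp (t * y) \<partial>distr (density M (mixed_weight V I f K C (s(j := 0)))) borel (V j))
        = (\<integral>\<^sup>+y. exp (t * y) \<partial>distr (density M (mixed_weight V I g K C (s(j := 0)))) borel (V j))"
      unfolding law_mgf[OF f_measurable] law_mgf[OF g_measurable] using insert.IH C_borel by blast
  qed simp_all
  have "emeasure (distr (density M (mixed_weight V I f K C (s(j := 0)))) borel (V j)) (C j)
      \<le> (\<integral>\<^sup>+y. exp (0 * y) \<partial>distr (density M (mixed_weight V I f K C (s(j := 0)))) borel (V j))"
    by (simp add: emeasure_mono)
  also have "\<dots> < \<infinity>"
    unfolding law_mgf[OF f_measurable] using insert.IH C_borel by blast
  finally show ?case
    using laws_eq law_emeasure[OF f_measurable] law_emeasure[OF g_measurable] by simp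
qed

lemma set_nn_integral_eq_on_sigma_sets:
  fixes f g :: "'a \<Rightarrow> ennreal"
  assumes "Int_stable E" "E \<subseteq> sets M" "space M \<in> E"
    and f_measurable: "f \<in> borel_measurable M" and g_measurable: "g \<in> borel_measurable M"
    and eq: "\<And>C. C \<in> E \<Longrightarrow> (\<integral>\<^sup>+\<omega>\<in>C. f \<omega> \<partial>M) = (\<integral>\<^sup>+\<omega>\<in>C. g \<omega> \<partial>M)"
    and finite: "(\<integral>\<^sup>+\<omega>. f \<omega> \<partial>M) < \<infinity>"
    and A: "A \<in> sigma_sets (space M) E"
  shows "(\<integral>\<^sup>+\<omega>\<in>A. f \<omega> \<partial>M) = (\<integral>\<^sup>+\<omega>\<in>A. g \<omega> \<partial>M)"
proof -
  define G where "G = sigma (space M) E"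
  have E_Pow: "E \<subseteq> Pow (space M)"
    using assms(2) sets.sets_into_space by blast
  have sets_G: "sets G = sigma_sets (space M) E"
    using E_Pow by (simp add: G_def)
  have "sigma_sets (space M) E \<subseteq> sets M"
    using assms(2) by (rule sets.sigma_sets_subset)
  then have subalgebra: "subalgebra (density M h) G" for h
    using E_Pow by (simp add: subalgebra_def sets_G G_def)
  have emeasure_restr: "emeasure (restr_to_subalg (density M h) G) C = (\<integral>\<^sup>+\<omega>\<in>C. h \<omega> \<partial>M)"
    if "h \<in> borel_measurable M" "C \<in> sigma_sets (space M) E" for h C
  proof -
    have "C \<in> sets M"
      using that \<open>sigma_sets (space M) E \<subseteq> sets M\<close> by blast
    then show ?thesis
      using that emeasure_restr_to_subalg[OF subalgebra, of C h] by (simp add: sets_G emeasure_density)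
  qed
  have "restr_to_subalg (density M f) G = restr_to_subalg (density M g) G"
  proof (rule measure_eqI_generator_eq[OF \<open>Int_stable E\<close> E_Pow])
    show "emeasure (restr_to_subalg (density M f) G) C = emeasure (restr_to_subalg (density M g) G) C"
      if "C \<in> E" for C
      using that eq emeasure_restr[OF f_measurable] emeasure_restr[OF g_measurable] by simp
    show "sets (restr_to_subalg (density M f) G) = sigma_sets (space M) E"
      "sets (restr_to_subalg (density M g) G) = sigma_sets (space M) E"
      by (simp_all add: sets_restr_to_subalg[OF subalgebra] sets_G)
    show "range (\<lambda>i::nat. space M) \<subseteq> E" "(\<Union>i::nat. space M) = space M"
      using assms(3) by auto
    have "(\<integral>\<^sup>+\<omega>\<in>space M. f \<omega> \<partial>M) = (\<integral>\<^sup>+\<omega>. f \<omega> \<partial>M)"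
      by (rule nn_integral_cong) simp
    then show "emeasure (restr_to_subalg (density M f) G) (space M) \<noteq> \<infinity>"
      using finite emeasure_restr[OF f_measurable] assms(3) by simp
  qed
  then show ?thesis
    using emeasure_restr[OF f_measurable A] emeasure_restr[OF g_measurable A] by simp
qed

definition cylinder_sets :: "'a measure \<Rightarrow> ('i \<Rightarrow> 'a \<Rightarrow> real) \<Rightarrow> 'i set \<Rightarrow> 'a set set"
  where "cylinder_sets M V I = {{\<omega> \<in> space M. \<forall>i\<in>I. V i \<omega> \<in> C i} | C. \<forall>i\<in>I. C i \<in> sets borel}"

lemma Int_stable_cylinder_sets: "Int_stable (cylinder_sets M V I)"
proof (rule Int_stableI)
  fix X Y assume "X \<in> cylinder_sets M V I" "Y \<in> cylinder_sets M V I"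
  then obtain C D where "X = {\<omega> \<in> space M. \<forall>i\<in>I. V i \<omega> \<in> C i}" "Y = {\<omega> \<in> space M. \<forall>i\<in>I. V i \<omega> \<in> D i}"
    and "\<forall>i\<in>I. C i \<in> sets borel" "\<forall>i\<in>I. D i \<in> sets borel"
    unfolding cylinder_sets_def by blast
  then show "X \<inter> Y \<in> cylinder_sets M V I"
    unfolding cylinder_sets_def by (intro CollectI exI[of _ "\<lambda>i. C i \<inter> D i"]) auto
qed

lemma space_in_cylinder_sets: "space M \<in> cylinder_sets M V I"
  unfolding cylinder_sets_def by (intro CollectI exI[of _ "\<lambda>_. UNIV"]) auto

lemma cylinder_sets_subset_sets:
  assumes "\<And>i. i \<in> I \<Longrightarrow> V i \<in> borel_measurable M" "finite I"
  shows "cylinder_sets M V I \<subseteq> sets M"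
  unfolding cylinder_sets_def using assms
  by (auto intro!: sets.sets_Collect_finite_All measurable_sets_Collect[of "V _"])

lemma generated_sigma_sets_subset_cylinder_sets:
  "sigma_sets (space M) {V i -` C \<inter> space M | i C. i \<in> I \<and> C \<in> sets borel}
    \<subseteq> sigma_sets (space M) (cylinder_sets M V I)"
proof (rule sigma_sets_mono', clarify)
  fix i and C :: "real set" assume "i \<in> I" "C \<in> sets borel"
  then show "V i -` C \<inter> space M \<in> cylinder_sets M V I"
    unfolding cylinder_sets_def by (intro CollectI exI[of _ "(\<lambda>_. UNIV)(i := C)"]) auto
qed

lemma mixed_weight_all_eq_indicator:
  assumes "finite I" "\<omega> \<in> space M"
  shows "mixed_weight V I h I C s \<omega> = h \<omega> * indicator {\<omega> \<in> space M. \<forall>i\<in>I. V i \<omega> \<in> C i} \<omega>"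
proof (cases "\<forall>i\<in>I. V i \<omega> \<in> C i")
  case True
  then show ?thesis
    using assms(2) by (simp add: mixed_weight_def)
next
  case False
  then have "(\<Prod>i\<in>I. indicator (C i) (V i \<omega>) :: ennreal) = 0"
    using assms(1) by (auto intro!: prod_zero simp: indicator_def)
  then show ?thesis
    using False by (simp add: mixed_weight_def)
qed

lemma set_nn_integral_eq_on_generated_of_joint_mgf_eq:
  fixes M :: "'a measure" and V :: "'i \<Rightarrow> 'a \<Rightarrow> real" and f g :: "'a \<Rightarrow> ennreal"
  assumes V_measurable: "\<And>i. i \<in> I \<Longrightarrow> V i \<in> borel_measurable M" and "finite I"
    and f_measurable: "f \<in> borel_measurable M" and g_measurable: "g \<in> borel_measurable M"
    and mgf_eq: "\<And>s. (\<integral>\<^sup>+\<omega>. f \<omega> * exp (\<Sum>i\<in>I. s i * V i \<omega>) \<partial>M) = (\<integral>\<^sup>+\<omega>. g \<omega> * exp (\<Sum>i\<in>I. s i * V i \<omega>) \<partial>M)"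
    and mgf_finite: "\<And>s. (\<integral>\<^sup>+\<omega>. f \<omega> * exp (\<Sum>i\<in>I. s i * V i \<omega>) \<partial>M) < \<infinity>"
    and A: "A \<in> sigma_sets (space M) {V i -` C \<inter> space M | i C. i \<in> I \<and> C \<in> sets borel}"
  shows "(\<integral>\<^sup>+\<omega>\<in>A. f \<omega> \<partial>M) = (\<integral>\<^sup>+\<omega>\<in>A. g \<omega> \<partial>M)"
proof (rule set_nn_integral_eq_on_sigma_sets[OF Int_stable_cylinder_sets _ space_in_cylinder_sets f_measurable g_measurable])
  show "cylinder_sets M V I \<subseteq> sets M"
    using V_measurable \<open>finite I\<close> by (rule cylinder_sets_subset_sets)
  show "A \<in> sigma_sets (space M) (cylinder_sets M V I)"
    using A generated_sigma_sets_subset_cylinder_sets by blast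
  show "(\<integral>\<^sup>+\<omega>. f \<omega> \<partial>M) < \<infinity>"
    using mgf_finite[of "\<lambda>_. 0"] by simp
  fix X assume "X \<in> cylinder_sets M V I"
  then obtain C where X: "X = {\<omega> \<in> space M. \<forall>i\<in>I. V i \<omega> \<in> C i}" and C_borel: "\<forall>i\<in>I. C i \<in> sets borel"
    unfolding cylinder_sets_def by blast
  have mixed_weight_empty: "mixed_weight V I h {} C s = (\<lambda>\<omega>. h \<omega> * exp (\<Sum>i\<in>I. s i * V i \<omega>))" for h s
    by (simp add: mixed_weight_def fun_eq_iff)
  have "(\<integral>\<^sup>+\<omega>. mixed_weight V I f I C (\<lambda>_. 0) \<omega> \<partial>M) = (\<integral>\<^sup>+\<omega>. mixed_weight V I g I C (\<lambda>_. 0) \<omega> \<partial>M)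
      \<and> (\<integral>\<^sup>+\<omega>. mixed_weight V I f I C (\<lambda>_. 0) \<omega> \<partial>M) < \<infinity>"
    by (rule nn_integral_mixed_weight_eq[where C = C])
      (use V_measurable \<open>finite I\<close> f_measurable g_measurable mgf_eq mgf_finite C_borel in \<open>simp_all add: mixed_weight_empty\<close>)
  moreover have "(\<integral>\<^sup>+\<omega>. mixed_weight V I h I C (\<lambda>_. 0) \<omega> \<partial>M) = (\<integral>\<^sup>+\<omega>\<in>X. h \<omega> \<partial>M)" for h
    unfolding X using \<open>finite I\<close> by (intro nn_integral_cong mixed_weight_all_eq_indicator)
  ultimately show "(\<integral>\<^sup>+\<omega>\<in>X. f \<omega> \<partial>M) = (\<integral>\<^sup>+\<omega>\<in>X. g \<omega> \<partial>M)"
    by simp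
qed

section \<open>The Gaussian space of a fractional Brownian motion\<close>

lemma normal_density_mult_exp:
  fixes \<sigma> x :: real
  assumes "0 < \<sigma>"
  shows "normal_density 0 \<sigma> x * exp x = exp (\<sigma>\<^sup>2 / 2) * normal_density (\<sigma>\<^sup>2) \<sigma> x"
proof -
  have "- (x - 0)\<^sup>2 / (2 * \<sigma>\<^sup>2) + x = \<sigma>\<^sup>2 / 2 + - (x - \<sigma>\<^sup>2)\<^sup>2 / (2 * \<sigma>\<^sup>2)"
    using assms by (simp add: field_simps power2_eq_square)
  then show ?thesis
    unfolding normal_density_def by (simp add: exp_add[symmetric] mult_ac)
qed

lemma normal_density_exp_integral:
  fixes \<sigma> :: real
  assumes "0 < \<sigma>"
  shows "integrable lborel (\<lambda>x. normal_density 0 \<sigma> x * exp x)"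
    and "(\<integral>x. normal_density 0 \<sigma> x * exp x \<partial>lborel) = exp (\<sigma>\<^sup>2 / 2)"
  unfolding normal_density_mult_exp[OF assms] using assms by simp_all

lemma dyadic_in_unit: "i \<le> 2 ^ n \<Longrightarrow> dyadic n i \<in> {0..1}"
  unfolding dyadic_def by (simp add: field_simps)

locale fbm_unit =
  fixes M :: "'a measure" and B :: "real \<Rightarrow> 'a \<Rightarrow> real" and H :: real
  assumes fbm: "fbm_on_unit M H B"
begin

sublocale prob_space M
  using fbm by (simp add: fbm_on_unit_def)

lemma B_measurable: "t \<in> {0..1} \<Longrightarrow> B t \<in> borel_measurable M"
  and B_integrable: "t \<in> {0..1} \<Longrightarrow> integrable M (B t)"
  and B_mean: "t \<in> {0..1} \<Longrightarrow> integral\<^sup>L M (B t) = 0"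
  using fbm by (simp_all add: fbm_on_unit_def)

lemma B_mult_integrable: "s \<in> {0..1} \<Longrightarrow> t \<in> {0..1} \<Longrightarrow> integrable M (\<lambda>\<omega>. B s \<omega> * B t \<omega>)"
  and B_covariance: "s \<in> {0..1} \<Longrightarrow> t \<in> {0..1} \<Longrightarrow>
    (\<integral>\<omega>. B s \<omega> * B t \<omega> \<partial>M) = (\<bar>s\<bar> powr (2 * H) + \<bar>t\<bar> powr (2 * H) - \<bar>s - t\<bar> powr (2 * H)) / 2"
  using fbm by (simp_all add: fbm_on_unit_def)

definition lincomb :: "('a \<Rightarrow> real) \<Rightarrow> bool"
  where "lincomb u \<longleftrightarrow> (\<exists>S c. finite S \<and> S \<subseteq> {0..1} \<and> u = (\<lambda>\<omega>. \<Sum>t\<in>S. c t * B t \<omega>))"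

lemma lincomb_gaussian: "lincomb u \<Longrightarrow> gaussian_rv M u"
  using fbm unfolding lincomb_def fbm_on_unit_def by blast

lemma lincomb_B: "t \<in> {0..1} \<Longrightarrow> lincomb (B t)"
  unfolding lincomb_def by (intro exI[of _ "{t}"] exI[of _ "\<lambda>_. 1"]) auto

lemma lincomb_zero: "lincomb (\<lambda>\<omega>. 0)"
  unfolding lincomb_def by (intro exI[of _ "{}"]) auto

lemma lincomb_add:
  assumes "lincomb u" "lincomb v"
  shows "lincomb (\<lambda>\<omega>. u \<omega> + v \<omega>)"
proof -
  obtain S c T d where S: "finite S" "S \<subseteq> {0..1}" "u = (\<lambda>\<omega>. \<Sum>t\<in>S. c t * B t \<omega>)"
    and T: "finite T" "T \<subseteq> {0..1}" "v = (\<lambda>\<omega>. \<Sum>t\<in>T. d t * B t \<omega>)"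
    using assms unfolding lincomb_def by blast
  define e where "e t = (if t \<in> S then c t else 0) + (if t \<in> T then d t else 0)" for t
  have "(\<Sum>t\<in>S \<union> T. e t * B t \<omega>) = (\<Sum>t\<in>S. c t * B t \<omega>) + (\<Sum>t\<in>T. d t * B t \<omega>)" for \<omega>
  proof -
    have "(\<Sum>t\<in>S \<union> T. e t * B t \<omega>) =
        (\<Sum>t\<in>S \<union> T. (if t \<in> S then c t * B t \<omega> else 0) + (if t \<in> T then d t * B t \<omega> else 0))"
      by (rule sum.cong) (simp_all add: e_def distrib_right)
    also have "\<dots> =
        (\<Sum>t\<in>S \<union> T. if t \<in> S then c t * B t \<omega> else 0) + (\<Sum>t\<in>S \<union> T. if t \<in> T then d t * B t \<omega> else 0)"
      by (rule sum.distrib)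
    also have "\<dots> = (\<Sum>t\<in>(S \<union> T) \<inter> S. c t * B t \<omega>) + (\<Sum>t\<in>(S \<union> T) \<inter> T. d t * B t \<omega>)"
      using S T by (simp add: sum.inter_restrict[symmetric])
    also have "\<dots> = (\<Sum>t\<in>S. c t * B t \<omega>) + (\<Sum>t\<in>T. d t * B t \<omega>)"
      by (simp add: Int_absorb1)
    finally show ?thesis .
  qed
  then show ?thesis
    unfolding lincomb_def using S T by (intro exI[of _ "S \<union> T"] exI[of _ e]) auto
qed

lemma lincomb_cmult: "lincomb u \<Longrightarrow> lincomb (\<lambda>\<omega>. a * u \<omega>)"
  unfolding lincomb_def by (auto simp: sum_distrib_left mult.assoc intro!: exI[of _ "\<lambda>t. a * _ t"])

lemma lincomb_diff: "lincomb u \<Longrightarrow> lincomb v \<Longrightarrow> lincomb (\<lambda>\<omega>. u \<omega> - v \<omega>)"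
  using lincomb_add[of u "\<lambda>\<omega>. (- 1) * v \<omega>"] lincomb_cmult[of v "- 1"] by simp

lemma lincomb_sum: "finite I \<Longrightarrow> (\<And>i. i \<in> I \<Longrightarrow> lincomb (u i)) \<Longrightarrow> lincomb (\<lambda>\<omega>. \<Sum>i\<in>I. u i \<omega>)"
  by (induction I rule: finite_induct) (simp_all add: lincomb_zero lincomb_add)

lemma lincomb_measurable: "lincomb u \<Longrightarrow> u \<in> borel_measurable M"
  unfolding lincomb_def using B_measurable by (auto intro!: borel_measurable_sum borel_measurable_times)

lemma lincomb_integrable: "lincomb u \<Longrightarrow> integrable M u"
  unfolding lincomb_def using B_integrable by (auto simp: subset_iff)

lemma lincomb_mean: "lincomb u \<Longrightarrow> integral\<^sup>L M u = 0"
  unfolding lincomb_def using B_integrable B_mean by (auto simp: Bochner_Integration.integral_sum subset_iff)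

lemma lincomb_mult_integrable:
  assumes "lincomb u" "lincomb v"
  shows "integrable M (\<lambda>\<omega>. u \<omega> * v \<omega>)"
proof -
  obtain S c T d where S: "finite S" "S \<subseteq> {0..1}" "u = (\<lambda>\<omega>. \<Sum>t\<in>S. c t * B t \<omega>)"
    and T: "finite T" "T \<subseteq> {0..1}" "v = (\<lambda>\<omega>. \<Sum>t\<in>T. d t * B t \<omega>)"
    using assms unfolding lincomb_def by blast
  have "integrable M (\<lambda>\<omega>. \<Sum>s\<in>S. \<Sum>t\<in>T. (c s * d t) * (B s \<omega> * B t \<omega>))"
    using S T B_mult_integrable by (intro Bochner_Integration.integrable_sum integrable_mult_right) (auto simp: subset_iff)
  then show ?thesis
    unfolding S(3) T(3) by (simp add: sum_product mult_ac)
qed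

text \<open>On the centred variables \<open>lincomb\<close> this is the covariance.\<close>

definition cov :: "('a \<Rightarrow> real) \<Rightarrow> ('a \<Rightarrow> real) \<Rightarrow> real"
  where "cov u v = (\<integral>\<omega>. u \<omega> * v \<omega> \<partial>M)"

lemma cov_comm: "cov u v = cov v u"
  unfolding cov_def by (simp add: mult.commute)

lemma cov_self_nonneg: "0 \<le> cov u u"
  unfolding cov_def by simp

lemma cov_cmult_left: "cov (\<lambda>\<omega>. a * u \<omega>) v = a * cov u v"
  unfolding cov_def by (simp add: mult.assoc)

lemma cov_add_left: "lincomb u \<Longrightarrow> lincomb u' \<Longrightarrow> lincomb v \<Longrightarrow> cov (\<lambda>\<omega>. u \<omega> + u' \<omega>) v = cov u v + cov u' v"
  unfolding cov_def using lincomb_mult_integrable by (simp add: distrib_right)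

lemma cov_diff_left: "lincomb u \<Longrightarrow> lincomb u' \<Longrightarrow> lincomb v \<Longrightarrow> cov (\<lambda>\<omega>. u \<omega> - u' \<omega>) v = cov u v - cov u' v"
  unfolding cov_def using lincomb_mult_integrable by (simp add: left_diff_distrib)

lemma cov_eq_0_of_cov_self_eq_0:
  assumes "lincomb u" "cov u u = 0" "lincomb v"
  shows "cov u v = 0"
proof -
  have "AE \<omega> in M. u \<omega> * u \<omega> = 0"
    using assms(2) lincomb_mult_integrable[OF assms(1,1)] integral_nonneg_eq_0_iff_AE[of M "\<lambda>\<omega>. u \<omega> * u \<omega>"]
    unfolding cov_def by simp
  then have "AE \<omega> in M. u \<omega> * v \<omega> = 0"
    by eventually_elim simp
  then show ?thesis
    unfolding cov_def by (simp add: integral_eq_zero_AE)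
qed

lemma integral_exp_lincomb:
  assumes "lincomb u"
  shows "integrable M (\<lambda>\<omega>. exp (u \<omega>))" and "(\<integral>\<omega>. exp (u \<omega>) \<partial>M) = exp (cov u u / 2)"
proof -
  have [measurable]: "u \<in> borel_measurable M"
    using assms by (rule lincomb_measurable)
  have "(\<exists>c. AE \<omega> in M. u \<omega> = c) \<or> (\<exists>\<mu> \<sigma>. 0 < \<sigma> \<and> distributed M lborel u (normal_density \<mu> \<sigma>))"
    using lincomb_gaussian[OF assms] unfolding gaussian_rv_def by simp
  then have "integrable M (\<lambda>\<omega>. exp (u \<omega>)) \<and> (\<integral>\<omega>. exp (u \<omega>) \<partial>M) = exp (cov u u / 2)"
  proof
    assume "\<exists>c. AE \<omega> in M. u \<omega> = c"
    then obtain c where c: "AE \<omega> in M. u \<omega> = c"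
      by blast
    then have "c = expectation u"
      by (simp add: integral_cong_AE[of u M "\<lambda>_. c"] prob_space)
    then have u_0: "AE \<omega> in M. u \<omega> = 0"
      using c lincomb_mean[OF assms] by simp
    then have "AE \<omega> in M. exp (u \<omega>) = 1" "AE \<omega> in M. u \<omega> * u \<omega> = 0"
      by auto
    then show ?thesis
      by (simp add: integrable_cong_AE[of _ M "\<lambda>_. 1"] integral_cong_AE[of _ M "\<lambda>_. 1"] cov_def integral_eq_zero_AE prob_space)
  next
    assume "\<exists>\<mu> \<sigma>. 0 < \<sigma> \<and> distributed M lborel u (normal_density \<mu> \<sigma>)"
    then obtain \<mu> \<sigma> where \<sigma>: "0 < \<sigma>" and law: "distributed M lborel u (normal_density \<mu> \<sigma>)"
      by blast
    have "\<mu> = 0"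
      using normal_distributed_expectation[OF \<sigma> law] lincomb_mean[OF assms] by simp
    with law have law_0: "distributed M lborel u (normal_density 0 \<sigma>)"
      by simp
    have "cov u u = \<sigma>\<^sup>2"
      using normal_distributed_variance[OF \<sigma> law] lincomb_mean[OF assms] by (simp add: cov_def power2_eq_square)
    then show ?thesis
      using distributed_integrable[OF law_0, of exp] distributed_integral[OF law_0, of exp]
        normal_density_exp_integral[OF \<sigma>] by simp
  qed
  then show "integrable M (\<lambda>\<omega>. exp (u \<omega>))" "(\<integral>\<omega>. exp (u \<omega>) \<partial>M) = exp (cov u u / 2)"
    by simp_all
qed

lemma cov_self_add_uncorrelated:
  assumes "lincomb u" "lincomb v" "cov u v = 0"
  shows "cov (\<lambda>\<omega>. u \<omega> + v \<omega>) (\<lambda>\<omega>. u \<omega> + v \<omega>) = cov u u + cov v v"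
proof -
  have "cov (\<lambda>\<omega>. u \<omega> + v \<omega>) (\<lambda>\<omega>. u \<omega> + v \<omega>) = cov (\<lambda>\<omega>. u \<omega> + v \<omega>) u + cov (\<lambda>\<omega>. u \<omega> + v \<omega>) v"
    using assms(1,2) lincomb_add cov_add_left cov_comm by metis
  also have "\<dots> = cov u u + cov v v"
    using assms cov_add_left cov_comm[of v u] by simp
  finally show ?thesis .
qed

lemma integral_exp_add_uncorrelated:
  assumes "lincomb u" "lincomb v" "cov u v = 0"
  shows "(\<integral>\<omega>. exp (u \<omega> + v \<omega>) \<partial>M) = (\<integral>\<omega>. exp (u \<omega>) \<partial>M) * (\<integral>\<omega>. exp (v \<omega>) \<partial>M)"
  using integral_exp_lincomb(2) assms lincomb_add[OF assms(1,2)] cov_self_add_uncorrelated[OF assms]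
  by (simp add: exp_add[symmetric] add_divide_distrib)

definition comb :: "('i \<Rightarrow> real) \<Rightarrow> ('i \<Rightarrow> real) \<Rightarrow> 'i set \<Rightarrow> 'a \<Rightarrow> real"
  where "comb p c I \<omega> = (\<Sum>i\<in>I. c i * B (p i) \<omega>)"

lemma lincomb_comb: "finite I \<Longrightarrow> p ` I \<subseteq> {0..1} \<Longrightarrow> lincomb (comb p c I)"
  unfolding comb_def[abs_def] by (auto intro!: lincomb_sum lincomb_cmult lincomb_B)

lemma cov_comb_right:
  assumes "lincomb u" "finite I" "p ` I \<subseteq> {0..1}"
  shows "cov u (comb p c I) = (\<Sum>i\<in>I. c i * cov u (B (p i)))"
proof -
  have "integrable M (\<lambda>\<omega>. c i * (u \<omega> * B (p i) \<omega>))" if "i \<in> I" for i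
    using assms that by (intro integrable_mult_right lincomb_mult_integrable lincomb_B) auto
  then show ?thesis
    unfolding cov_def comb_def
    by (simp add: sum_distrib_left Bochner_Integration.integral_sum mult.left_commute)
qed

lemma comb_insert: "finite I \<Longrightarrow> k \<notin> I \<Longrightarrow> comb p c (insert k I) \<omega> = c k * B (p k) \<omega> + comb p c I \<omega>"
  by (simp add: comb_def)

lemma comb_cong: "(\<And>i. i \<in> I \<Longrightarrow> c i = d i) \<Longrightarrow> comb p c I = comb p d I"
  unfolding comb_def[abs_def] by simp

lemma comb_diff_cmult: "comb p (\<lambda>i. c i - a * d i) I \<omega> = comb p c I \<omega> - a * comb p d I \<omega>"
  unfolding comb_def by (simp add: sum_subtractf sum_distrib_left left_diff_distrib mult.assoc)

text \<open>If \<open>cov W W = 0\<close> the coefficient is \<open>0\<close> by the convention \<open>x / 0 = 0\<close>,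
  and then \<open>W\<close> is uncorrelated with everything anyway.\<close>

lemma cov_gram_schmidt_step:
  assumes "lincomb Y" "lincomb W"
  shows "cov (\<lambda>\<omega>. Y \<omega> - cov Y W / cov W W * W \<omega>) W = 0"
proof -
  have "cov (\<lambda>\<omega>. Y \<omega> - cov Y W / cov W W * W \<omega>) W = cov Y W - cov Y W / cov W W * cov W W"
    unfolding cov_diff_left[OF assms(1) lincomb_cmult[OF assms(2)] assms(2)] cov_cmult_left ..
  also have "\<dots> = 0"
    using cov_eq_0_of_cov_self_eq_0[OF assms(2) _ assms(1)] by (cases "cov W W = 0") (simp_all add: cov_comm)
  finally show ?thesis .
qed

lemma orthogonal_projection_exists:
  assumes "finite I" "p ` I \<subseteq> {0..1}" "lincomb x"
  shows "\<exists>c. \<forall>j\<in>I. cov (\<lambda>\<omega>. x \<omega> - comb p c I \<omega>) (B (p j)) = 0"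
  using assms
proof (induction I arbitrary: x rule: finite_induct)
  case empty
  then show ?case
    by simp
next
  case (insert k I)
  have p_I: "p ` I \<subseteq> {0..1}" and p_k: "p k \<in> {0..1}"
    using insert.prems by auto
  obtain c where c: "\<forall>j\<in>I. cov (\<lambda>\<omega>. x \<omega> - comb p c I \<omega>) (B (p j)) = 0"
    using insert.IH[OF p_I \<open>lincomb x\<close>] by blast
  obtain d where d: "\<forall>j\<in>I. cov (\<lambda>\<omega>. B (p k) \<omega> - comb p d I \<omega>) (B (p j)) = 0"
    using insert.IH[OF p_I lincomb_B[OF p_k]] by blast
  define Y0 where "Y0 \<omega> = x \<omega> - comb p c I \<omega>" for \<omega>
  define W where "W \<omega> = B (p k) \<omega> - comb p d I \<omega>" for \<omega>
  define a where "a = cov Y0 W / cov W W"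
  define Y where "Y \<omega> = Y0 \<omega> - a * W \<omega>" for \<omega>
  have lincomb: "lincomb Y0" "lincomb W" "lincomb (\<lambda>\<omega>. a * W \<omega>)" "lincomb Y" "lincomb (comb p d I)"
    using insert.prems lincomb_comb[OF \<open>finite I\<close> p_I]
    by (auto simp: Y0_def[abs_def] W_def[abs_def] Y_def[abs_def] intro!: lincomb_diff lincomb_cmult lincomb_B)
  have Y_orth_I: "cov Y (B (p j)) = 0" if "j \<in> I" for j
    using that c d lincomb insert.prems cov_diff_left[of Y0 "\<lambda>\<omega>. a * W \<omega>"]
    by (simp add: Y_def[abs_def] Y0_def[abs_def] W_def[abs_def] cov_cmult_left lincomb_B subset_iff)
  have "cov W Y = 0"
    using cov_gram_schmidt_step[of Y0 W] lincomb by (simp add: cov_comm a_def Y_def[abs_def])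
  moreover have "cov (comb p d I) Y = 0"
    using cov_comb_right[OF _ \<open>finite I\<close> p_I, of Y d] Y_orth_I lincomb by (simp add: cov_comm)
  ultimately have Y_orth_k: "cov Y (B (p k)) = 0"
    using cov_add_left[of W "comb p d I" Y] lincomb by (simp add: W_def[abs_def] cov_comm)
  define c' where "c' = (\<lambda>i. c i - a * d i)(k := a)"
  have "comb p c' I = comb p (\<lambda>i. c i - a * d i) I"
    using insert.hyps by (intro comb_cong) (auto simp: c'_def)
  then have "comb p c' (insert k I) \<omega> = a * B (p k) \<omega> + comb p c I \<omega> - a * comb p d I \<omega>" for \<omega>
    using insert.hyps by (simp add: comb_insert comb_diff_cmult c'_def)
  then have "(\<lambda>\<omega>. x \<omega> - comb p c' (insert k I) \<omega>) = Y"
    by (simp add: fun_eq_iff Y_def Y0_def W_def algebra_simps)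
  then show ?case
    using Y_orth_I Y_orth_k by (intro exI[of _ c']) auto
qed

text \<open>Jointly Gaussian and uncorrelated implies independent.\<close>

lemma set_nn_integral_exp_uncorrelated:
  assumes "finite I" "p ` I \<subseteq> {0..1}" "lincomb Y"
    and uncorrelated: "\<And>j. j \<in> I \<Longrightarrow> cov Y (B (p j)) = 0"
    and A: "A \<in> sigma_sets (space M) {B (p i) -` C \<inter> space M | i C. i \<in> I \<and> C \<in> sets borel}"
  shows "(\<integral>\<^sup>+\<omega>\<in>A. exp (Y \<omega>) \<partial>M) = (\<integral>\<omega>. exp (Y \<omega>) \<partial>M) * emeasure M A"
proof -
  define c where "c = (\<integral>\<omega>. exp (Y \<omega>) \<partial>M)"
  have lincomb_comb: "lincomb (comb p s I)" for s
    using assms(1,2) by (rule lincomb_comb)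
  have [measurable]: "Y \<in> borel_measurable M"
    using assms(3) by (rule lincomb_measurable)
  have sum_eq_comb: "(\<Sum>i\<in>I. s i * B (p i) \<omega>) = comb p s I \<omega>" for s \<omega>
    by (simp add: comb_def)
  have mgf_Y: "(\<integral>\<^sup>+\<omega>. exp (Y \<omega>) * exp (\<Sum>i\<in>I. s i * B (p i) \<omega>) \<partial>M) = ennreal (c * (\<integral>\<omega>. exp (comb p s I \<omega>) \<partial>M))" for s
  proof -
    have "cov Y (comb p s I) = 0"
      using cov_comb_right[OF assms(3,1,2)] uncorrelated by simp
    then have "(\<integral>\<omega>. exp (Y \<omega> + comb p s I \<omega>) \<partial>M) = c * (\<integral>\<omega>. exp (comb p s I \<omega>) \<partial>M)"
      unfolding c_def by (rule integral_exp_add_uncorrelated[OF assms(3) lincomb_comb])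
    then show ?thesis
      using integral_exp_lincomb(1)[OF lincomb_add[OF assms(3) lincomb_comb]]
      by (simp add: sum_eq_comb nn_integral_eq_integral exp_add[symmetric] ennreal_mult[symmetric])
  qed
  have mgf_c: "(\<integral>\<^sup>+\<omega>. ennreal c * exp (\<Sum>i\<in>I. s i * B (p i) \<omega>) \<partial>M) = ennreal (c * (\<integral>\<omega>. exp (comb p s I \<omega>) \<partial>M))" for s
    using integral_exp_lincomb(1)[OF lincomb_comb]
    by (simp add: sum_eq_comb nn_integral_eq_integral c_def ennreal_mult[symmetric])
  have "{B (p i) -` C \<inter> space M | i C. i \<in> I \<and> C \<in> sets borel} \<subseteq> sets M"
    using assms(2) B_measurable by (auto intro: measurable_sets)
  then have [measurable]: "A \<in> sets M"
    using A sets.sigma_sets_subset by blast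
  have "(\<integral>\<^sup>+\<omega>\<in>A. exp (Y \<omega>) \<partial>M) = (\<integral>\<^sup>+\<omega>\<in>A. c \<partial>M)"
  proof (rule set_nn_integral_eq_on_generated_of_joint_mgf_eq[OF _ assms(1) _ _ _ _ A])
    show "B (p i) \<in> borel_measurable M" if "i \<in> I" for i
      using that assms(2) B_measurable by auto
  qed (simp_all add: mgf_Y mgf_c ennreal_mult[symmetric])
  then show ?thesis
    by (simp add: c_def nn_integral_cmult_indicator)
qed

section \<open>Conditioning on the dyadic values\<close>

lemma dyadic_image_subset: "dyadic n ` {..2 ^ n} \<subseteq> {0..1}"
  using dyadic_in_unit by auto

lemma sets_gen_sigma: "sets (gen_sigma M B n) =
    sigma_sets (space M) {B (dyadic n i) -` C \<inter> space M | i C. i \<in> {..2 ^ n} \<and> C \<in> sets borel}"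
  unfolding gen_sigma_def by (subst sets_measure_of) auto

lemma space_gen_sigma: "space (gen_sigma M B n) = space M"
  unfolding gen_sigma_def by (subst space_measure_of) auto

lemma subalgebra_gen_sigma: "subalgebra M (gen_sigma M B n)"
proof -
  have "{B (dyadic n i) -` C \<inter> space M | i C. i \<in> {..2 ^ n} \<and> C \<in> sets borel} \<subseteq> sets M"
    using B_measurable dyadic_in_unit by (auto intro: measurable_sets)
  then show ?thesis
    unfolding subalgebra_def sets_gen_sigma space_gen_sigma by (simp add: sets.sigma_sets_subset)
qed

lemma sigma_finite_subalgebra_gen_sigma: "sigma_finite_subalgebra M (gen_sigma M B n)"
  by (intro finite_measure_subalgebra_is_sigma_finite finite_measure_subalgebra.intro finite_measure_subalgebra_axioms.intro
      subalgebra_gen_sigma) (simp add: finite_measureI)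

lemma comb_measurable_gen_sigma: "comb (dyadic n) c {..2 ^ n} \<in> borel_measurable (gen_sigma M B n)"
proof -
  have "B (dyadic n i) \<in> borel_measurable (gen_sigma M B n)" if "i \<le> 2 ^ n" for i
  proof (rule measurableI)
    fix C :: "real set" assume "C \<in> sets borel"
    then show "B (dyadic n i) -` C \<inter> space (gen_sigma M B n) \<in> sets (gen_sigma M B n)"
      unfolding sets_gen_sigma space_gen_sigma using that by blast
  qed simp
  then show ?thesis
    unfolding comb_def[abs_def] by (auto intro!: borel_measurable_sum borel_measurable_times)
qed

lemma set_integral_uncorrelated_gen_sigma:
  assumes "lincomb Y" "\<And>j. j \<le> 2 ^ n \<Longrightarrow> cov Y (B (dyadic n j)) = 0" and A: "A \<in> sets (gen_sigma M B n)"
  shows "(\<integral>\<omega>\<in>A. Y \<omega> \<partial>M) = 0"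
proof -
  have [measurable]: "Y \<in> borel_measurable M" "A \<in> sets M"
    using assms(1) A subalgebra_gen_sigma by (auto simp: lincomb_measurable subalgebra_def)
  define law_on_A where "law_on_A = distr (density M (indicator A)) borel Y"
  define scaled_law where "scaled_law = distr (density M (\<lambda>_. ennreal (measure M A))) borel Y"
  have factor: "(\<integral>\<^sup>+\<omega>\<in>A. exp (t * Y \<omega>) \<partial>M) = (\<integral>\<omega>. exp (t * Y \<omega>) \<partial>M) * emeasure M A" for t
    using set_nn_integral_exp_uncorrelated[of "{..2 ^ n}" "dyadic n" "\<lambda>\<omega>. t * Y \<omega>" A]
      assms dyadic_image_subset lincomb_cmult[of Y t]
    by (simp add: cov_cmult_left sets_gen_sigma)
  have "law_on_A = scaled_law"
  proof (rule finite_measure_eq_of_mgf_eq)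
    have "(\<integral>\<^sup>+y. exp (t * y) \<partial>law_on_A) = (\<integral>\<omega>. exp (t * Y \<omega>) \<partial>M) * emeasure M A" for t
      unfolding law_on_A_def factor[symmetric] by (simp add: nn_integral_distr nn_integral_density mult.commute)
    moreover have "(\<integral>\<^sup>+y. exp (t * y) \<partial>scaled_law) = (\<integral>\<omega>. exp (t * Y \<omega>) \<partial>M) * emeasure M A" for t
      using integral_exp_lincomb(1)[OF lincomb_cmult[OF assms(1)]]
      by (simp add: scaled_law_def nn_integral_distr nn_integral_density nn_integral_cmult nn_integral_eq_integral
          emeasure_eq_measure mult.commute)
    ultimately show "(\<integral>\<^sup>+y. exp (t * y) \<partial>law_on_A) < \<infinity>"
      "(\<integral>\<^sup>+y. exp (t * y) \<partial>law_on_A) = (\<integral>\<^sup>+y. exp (t * y) \<partial>scaled_law)" for t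
      by (simp_all add: emeasure_eq_measure ennreal_mult_less_top)
  qed (simp_all add: law_on_A_def scaled_law_def)
  then have "(\<integral>y. y \<partial>law_on_A) = (\<integral>y. y \<partial>scaled_law)"
    by simp
  moreover have "integral\<^sup>L (density M (indicator A)) Y = (\<integral>\<omega>. indicator A \<omega> * Y \<omega> \<partial>M)"
    using integral_density[of Y M "indicator A"] by (simp add: ennreal_indicator)
  ultimately show ?thesis
    using lincomb_mean[OF assms(1)]
    by (simp add: law_on_A_def scaled_law_def integral_distr integral_density set_lebesgue_integral_def)
qed

lemma real_cond_exp_uncorrelated:
  assumes "lincomb Y" "\<And>j. j \<le> 2 ^ n \<Longrightarrow> cov Y (B (dyadic n j)) = 0"
  shows "AE \<omega> in M. real_cond_exp M (gen_sigma M B n) Y \<omega> = 0"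
    and "AE \<omega> in M. real_cond_exp M (gen_sigma M B n) (\<lambda>\<omega>. exp (Y \<omega>)) \<omega> = (\<integral>\<omega>. exp (Y \<omega>) \<partial>M)"
proof -
  interpret sigma_finite_subalgebra M "gen_sigma M B n"
    by (rule sigma_finite_subalgebra_gen_sigma)
  have [measurable]: "Y \<in> borel_measurable M"
    using assms(1) by (rule lincomb_measurable)
  show "AE \<omega> in M. real_cond_exp M (gen_sigma M B n) Y \<omega> = 0"
    using set_integral_uncorrelated_gen_sigma[OF assms] lincomb_integrable[OF assms(1)]
    by (intro real_cond_exp_charact) simp_all
  show "AE \<omega> in M. real_cond_exp M (gen_sigma M B n) (\<lambda>\<omega>. exp (Y \<omega>)) \<omega> = (\<integral>\<omega>. exp (Y \<omega>) \<partial>M)"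
  proof (intro real_cond_exp_charact)
    fix A assume A: "A \<in> sets (gen_sigma M B n)"
    then have [measurable]: "A \<in> sets M"
      using subalgebra_gen_sigma by (auto simp: subalgebra_def)
    have "(\<integral>\<^sup>+\<omega>\<in>A. exp (Y \<omega>) \<partial>M) = (\<integral>\<^sup>+\<omega>\<in>A. (\<integral>\<omega>. exp (Y \<omega>) \<partial>M) \<partial>M)"
      using set_nn_integral_exp_uncorrelated[of "{..2 ^ n}" "dyadic n" Y A] assms A dyadic_image_subset
      by (simp add: sets_gen_sigma nn_integral_cmult_indicator)
    then show "(\<integral>\<omega>\<in>A. exp (Y \<omega>) \<partial>M) = (\<integral>\<omega>\<in>A. (\<integral>\<omega>. exp (Y \<omega>) \<partial>M) \<partial>M)"
      using integral_exp_lincomb(1)[OF assms(1)]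
      by (simp add: nn_set_integral_eq_set_integral set_lebesgue_integral_def)
  qed (simp_all add: integral_exp_lincomb(1)[OF assms(1)])
qed

lemma lincomb_decomposition_gen_sigma:
  assumes "lincomb X"
  obtains L Y where "lincomb L" "lincomb Y" "L \<in> borel_measurable (gen_sigma M B n)"
    and "\<And>j. j \<le> 2 ^ n \<Longrightarrow> cov Y (B (dyadic n j)) = 0" and "cov Y L = 0" and "X = (\<lambda>\<omega>. Y \<omega> + L \<omega>)"
proof -
  obtain c where c: "\<forall>j\<in>{..2 ^ n}. cov (\<lambda>\<omega>. X \<omega> - comb (dyadic n) c {..2 ^ n} \<omega>) (B (dyadic n j)) = 0"
    using orthogonal_projection_exists[OF _ dyadic_image_subset assms] by auto
  define L where "L = comb (dyadic n) c {..2 ^ n}"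
  define Y where "Y \<omega> = X \<omega> - L \<omega>" for \<omega>
  have lincomb: "lincomb L" "lincomb Y"
    using assms lincomb_comb[OF _ dyadic_image_subset] by (auto simp: L_def Y_def[abs_def] intro!: lincomb_diff)
  moreover have uncorrelated: "cov Y (B (dyadic n j)) = 0" if "j \<le> 2 ^ n" for j
    using c that by (simp add: Y_def[abs_def] L_def)
  moreover have "cov Y L = 0"
    using cov_comb_right[OF lincomb(2) _ dyadic_image_subset] uncorrelated by (simp add: L_def)
  ultimately show ?thesis
    using comb_measurable_gen_sigma by (intro that) (auto simp: L_def Y_def)
qed

lemma real_cond_exp_exp_lincomb:
  assumes "lincomb X"
  obtains v where "v \<le> cov X X"
    and "\<And>\<theta>. AE \<omega> in M. real_cond_exp M (gen_sigma M B n) (\<lambda>\<omega>. exp (\<theta> * X \<omega>)) \<omega>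
      = exp (\<theta> * real_cond_exp M (gen_sigma M B n) X \<omega> + \<theta>\<^sup>2 * v / 2)"
proof -
  interpret sigma_finite_subalgebra M "gen_sigma M B n"
    by (rule sigma_finite_subalgebra_gen_sigma)
  obtain L Y where lincomb: "lincomb L" "lincomb Y" and [measurable]: "L \<in> borel_measurable (gen_sigma M B n)"
    and uncorrelated: "\<And>j. j \<le> 2 ^ n \<Longrightarrow> cov Y (B (dyadic n j)) = 0"
    and "cov Y L = 0" and X_eq: "X = (\<lambda>\<omega>. Y \<omega> + L \<omega>)"
    using lincomb_decomposition_gen_sigma[OF assms, where n = n] by blast
  have [measurable]: "Y \<in> borel_measurable M"
    using lincomb(2) by (rule lincomb_measurable)
  have variance_le: "cov Y Y \<le> cov X X"
    using cov_self_add_uncorrelated[OF lincomb(2,1) \<open>cov Y L = 0\<close>] cov_self_nonneg[of L] X_eq by simp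
  have "AE \<omega> in M. real_cond_exp M (gen_sigma M B n) Y \<omega> = 0"
    by (rule real_cond_exp_uncorrelated(1)[OF lincomb(2)]) (use uncorrelated in auto)
  then have "AE \<omega> in M. real_cond_exp M (gen_sigma M B n) (\<lambda>\<omega>. Y \<omega> + L \<omega>) \<omega> = L \<omega>"
    using real_cond_exp_add[OF lincomb_integrable[OF lincomb(2)] lincomb_integrable[OF lincomb(1)]]
      real_cond_exp_F_meas[OF lincomb_integrable[OF lincomb(1)] \<open>L \<in> borel_measurable (gen_sigma M B n)\<close>]
    by eventually_elim simp
  then have cond_exp_X: "AE \<omega> in M. real_cond_exp M (gen_sigma M B n) X \<omega> = L \<omega>"
    unfolding X_eq[symmetric] .
  have cond_exp_exp_X: "AE \<omega> in M. real_cond_exp M (gen_sigma M B n) (\<lambda>\<omega>. exp (\<theta> * X \<omega>)) \<omega>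
      = exp (\<theta> * L \<omega>) * exp (\<theta>\<^sup>2 * cov Y Y / 2)" for \<theta>
  proof -
    have "cov (\<lambda>\<omega>. \<theta> * Y \<omega>) (\<lambda>\<omega>. \<theta> * Y \<omega>) = \<theta>\<^sup>2 * cov Y Y"
      using cov_cmult_left[of \<theta> Y] cov_comm by (metis (no_types) mult.assoc power2_eq_square)
    moreover have "AE \<omega> in M. real_cond_exp M (gen_sigma M B n) (\<lambda>\<omega>. exp (\<theta> * Y \<omega>)) \<omega>
        = (\<integral>\<omega>. exp (\<theta> * Y \<omega>) \<partial>M)"
      by (rule real_cond_exp_uncorrelated(2)[OF lincomb_cmult[OF lincomb(2)]])
        (use uncorrelated in \<open>simp add: cov_cmult_left\<close>)
    ultimately have "AE \<omega> in M. real_cond_exp M (gen_sigma M B n) (\<lambda>\<omega>. exp (\<theta> * Y \<omega>)) \<omega> = exp (\<theta>\<^sup>2 * cov Y Y / 2)"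
      using integral_exp_lincomb(2)[OF lincomb_cmult[OF lincomb(2)]] by simp
    moreover have "AE \<omega> in M. real_cond_exp M (gen_sigma M B n) (\<lambda>\<omega>. exp (\<theta> * L \<omega>) * exp (\<theta> * Y \<omega>)) \<omega>
        = exp (\<theta> * L \<omega>) * real_cond_exp M (gen_sigma M B n) (\<lambda>\<omega>. exp (\<theta> * Y \<omega>)) \<omega>"
      using integral_exp_lincomb(1)[OF lincomb_cmult[OF assms, of \<theta>]] X_eq
      by (intro real_cond_exp_mult) (simp_all add: distrib_left exp_add mult.commute)
    moreover have "(\<lambda>\<omega>. exp (\<theta> * X \<omega>)) = (\<lambda>\<omega>. exp (\<theta> * L \<omega>) * exp (\<theta> * Y \<omega>))"
      by (simp add: X_eq distrib_left exp_add mult.commute)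
    ultimately show ?thesis
      by (auto elim: AE_mp)
  qed
  show ?thesis
  proof (rule that[OF variance_le])
    show "AE \<omega> in M. real_cond_exp M (gen_sigma M B n) (\<lambda>\<omega>. exp (\<theta> * X \<omega>)) \<omega>
      = exp (\<theta> * real_cond_exp M (gen_sigma M B n) X \<omega> + \<theta>\<^sup>2 * cov Y Y / 2)" for \<theta>
      using cond_exp_X cond_exp_exp_X[of \<theta>] by eventually_elim (simp add: exp_add)
  qed
qed

section \<open>The second difference\<close>

lemma cov_second_difference:
  assumes "a \<in> {0..1}" "b \<in> {0..1}" "c \<in> {0..1}"
  shows "cov (\<lambda>\<omega>. 1/2 * B a \<omega> - B b \<omega> + 1/2 * B c \<omega>) (\<lambda>\<omega>. 1/2 * B a \<omega> - B b \<omega> + 1/2 * B c \<omega>)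
    = (\<bar>a - b\<bar> powr (2 * H) + \<bar>b - c\<bar> powr (2 * H)) / 2 - \<bar>a - c\<bar> powr (2 * H) / 4"
proof -
  define K where "K s t = (\<integral>\<omega>. B s \<omega> * B t \<omega> \<partial>M)" for s t
  have "(1/2 * B a \<omega> - B b \<omega> + 1/2 * B c \<omega>) * (1/2 * B a \<omega> - B b \<omega> + 1/2 * B c \<omega>) =
      1/4 * (B a \<omega> * B a \<omega>) + B b \<omega> * B b \<omega> + 1/4 * (B c \<omega> * B c \<omega>)
      - B a \<omega> * B b \<omega> - B b \<omega> * B c \<omega> + 1/2 * (B a \<omega> * B c \<omega>)" for \<omega>
    by (simp add: algebra_simps)
  then have "cov (\<lambda>\<omega>. 1/2 * B a \<omega> - B b \<omega> + 1/2 * B c \<omega>) (\<lambda>\<omega>. 1/2 * B a \<omega> - B b \<omega> + 1/2 * B c \<omega>)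
      = 1/4 * K a a + K b b + 1/4 * K c c - K a b - K b c + 1/2 * K a c"
    using assms B_mult_integrable by (simp add: cov_def K_def)
  also have "\<dots> = (\<bar>a - b\<bar> powr (2 * H) + \<bar>b - c\<bar> powr (2 * H)) / 2 - \<bar>a - c\<bar> powr (2 * H) / 4"
    using assms by (simp add: K_def B_covariance abs_minus_commute field_simps)
  finally show ?thesis .
qed

lemma cov_dyadic_second_difference_le:
  assumes "1 \<le> k" "2 * k \<le> 2 ^ N"
  defines "X \<equiv> \<lambda>\<omega>. 1/2 * B (dyadic N (2*k-2)) \<omega> - B (dyadic N (2*k-1)) \<omega> + 1/2 * B (dyadic N (2*k)) \<omega>"
  shows "cov X X \<le> 2 powr (- 2 * real N * H)"
proof -
  define h :: real where "h = 1 / 2 ^ N"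
  have "dyadic N j \<in> {0..1}" if "j \<le> 2 * k" for j
    using that assms(2) by (intro dyadic_in_unit) simp
  then have "cov X X = (\<bar>dyadic N (2*k-2) - dyadic N (2*k-1)\<bar> powr (2 * H) + \<bar>dyadic N (2*k-1) - dyadic N (2*k)\<bar> powr (2 * H)) / 2
      - \<bar>dyadic N (2*k-2) - dyadic N (2*k)\<bar> powr (2 * H) / 4"
    unfolding X_def by (intro cov_second_difference) auto
  moreover have "\<bar>dyadic N (2*k-2) - dyadic N (2*k-1)\<bar> = h" "\<bar>dyadic N (2*k-1) - dyadic N (2*k)\<bar> = h"
    "\<bar>dyadic N (2*k-2) - dyadic N (2*k)\<bar> = 2 * h"
    using assms(1) by (simp_all add: dyadic_def h_def of_nat_diff field_simps)
  ultimately have "cov X X = h powr (2 * H) - (2 * h) powr (2 * H) / 4"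
    by simp
  also have "\<dots> \<le> h powr (2 * H)"
    by simp
  also have "\<dots> = 2 powr (- 2 * real N * H)"
  proof -
    have "h = 2 powr (- real N)"
      by (simp add: h_def powr_minus powr_realpow divide_inverse)
    then show ?thesis
      by (simp add: powr_powr mult_ac)
  qed
  finally show ?thesis .
qed

lemma real_cond_exp_second_difference:
  assumes "2 * k \<le> 2 ^ (n + m)"
  shows "AE \<omega> in M. real_cond_exp M (gen_sigma M B n)
      (\<lambda>\<omega>. 1/2 * B (dyadic (n + m) (2*k-2)) \<omega> - B (dyadic (n + m) (2*k-1)) \<omega> + 1/2 * B (dyadic (n + m) (2*k)) \<omega>) \<omega>
    = mu_cond M B n m k \<omega>"
proof -
  interpret sigma_finite_subalgebra M "gen_sigma M B n"
    by (rule sigma_finite_subalgebra_gen_sigma)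
  define a b c where "a = dyadic (n + m) (2*k-2)" and "b = dyadic (n + m) (2*k-1)" and "c = dyadic (n + m) (2*k)"
  have "integrable M (B a)" "integrable M (B b)" "integrable M (B c)"
    using assms B_integrable dyadic_in_unit by (simp_all add: a_def b_def c_def)
  then have "AE \<omega> in M. real_cond_exp M (gen_sigma M B n) (\<lambda>\<omega>. 1/2 * B a \<omega> - B b \<omega> + 1/2 * B c \<omega>) \<omega> =
      real_cond_exp M (gen_sigma M B n) (\<lambda>\<omega>. 1/2 * B a \<omega> - B b \<omega>) \<omega> + real_cond_exp M (gen_sigma M B n) (\<lambda>\<omega>. 1/2 * B c \<omega>) \<omega>"
    and "AE \<omega> in M. real_cond_exp M (gen_sigma M B n) (\<lambda>\<omega>. 1/2 * B a \<omega> - B b \<omega>) \<omega>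
      = real_cond_exp M (gen_sigma M B n) (\<lambda>\<omega>. 1/2 * B a \<omega>) \<omega> - real_cond_exp M (gen_sigma M B n) (B b) \<omega>"
    and "AE \<omega> in M. real_cond_exp M (gen_sigma M B n) (\<lambda>\<omega>. 1/2 * B a \<omega>) \<omega> = 1/2 * real_cond_exp M (gen_sigma M B n) (B a) \<omega>"
    and "AE \<omega> in M. real_cond_exp M (gen_sigma M B n) (\<lambda>\<omega>. 1/2 * B c \<omega>) \<omega> = 1/2 * real_cond_exp M (gen_sigma M B n) (B c) \<omega>"
    by (intro real_cond_exp_add real_cond_exp_diff real_cond_exp_cmult; simp)+
  then show ?thesis
    unfolding a_def b_def c_def by eventually_elim (simp add: mu_cond_def)
qed

lemma Xi_eq_exp_mu_cond:
  assumes "1 \<le> m" "1 \<le> k" "k \<le> 2 ^ (n + m - 1)"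
  obtains v where "v \<le> 2 powr (- 2 * real (n + m) * H)"
    and "\<And>\<theta>. AE \<omega> in M. Xi M B n m k \<theta> \<omega> = exp (\<theta> * mu_cond M B n m k \<omega> + \<theta>\<^sup>2 * v / 2)"
proof -
  have "2 * k \<le> 2 ^ (n + m)"
    using assms by (cases "n + m") auto
  define X where "X \<omega> = 1/2 * B (dyadic (n + m) (2*k-2)) \<omega> - B (dyadic (n + m) (2*k-1)) \<omega> + 1/2 * B (dyadic (n + m) (2*k)) \<omega>"
    for \<omega>
  have "dyadic (n + m) j \<in> {0..1}" if "j \<le> 2 * k" for j
    using that \<open>2 * k \<le> 2 ^ (n + m)\<close> by (intro dyadic_in_unit) simp
  then have "lincomb X"
    unfolding X_def[abs_def] by (intro lincomb_add lincomb_diff lincomb_cmult lincomb_B) auto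
  then obtain v where "v \<le> cov X X"
    and cond_exp_exp: "\<And>\<theta>. AE \<omega> in M. real_cond_exp M (gen_sigma M B n) (\<lambda>\<omega>. exp (\<theta> * X \<omega>)) \<omega>
      = exp (\<theta> * real_cond_exp M (gen_sigma M B n) X \<omega> + \<theta>\<^sup>2 * v / 2)"
    using real_cond_exp_exp_lincomb[where n = n] by blast
  moreover have "cov X X \<le> 2 powr (- 2 * real (n + m) * H)"
    unfolding X_def[abs_def] using assms(2) \<open>2 * k \<le> 2 ^ (n + m)\<close> by (rule cov_dyadic_second_difference_le)
  ultimately have v_le: "v \<le> 2 powr (- 2 * real (n + m) * H)"
    by simp
  show ?thesis
  proof (rule that[OF v_le])
    have Xi_eq: "Xi M B n m k \<theta> = real_cond_exp M (gen_sigma M B n) (\<lambda>\<omega>. exp (\<theta> * X \<omega>))" for \<theta>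
      unfolding Xi_def X_def ..
    show "AE \<omega> in M. Xi M B n m k \<theta> \<omega> = exp (\<theta> * mu_cond M B n m k \<omega> + \<theta>\<^sup>2 * v / 2)" for \<theta>
      unfolding Xi_eq
      using real_cond_exp_second_difference[OF \<open>2 * k \<le> 2 ^ (n + m)\<close>] cond_exp_exp[of \<theta>]
      unfolding X_def[abs_def, symmetric] by eventually_elim simp
  qed
qed

end

theorem lemma12:
  fixes M :: "'a measure" and B :: "real \<Rightarrow> 'a \<Rightarrow> real"
    and H \<delta> \<rho> \<theta> :: real and n m k :: nat
  assumes "fbm_on_unit M H B"
    and "0 < H" and "H < 1" and "0 < \<delta>" and "\<delta> < H" and "0 < \<rho>"
    and "1 \<le> n" and "1 \<le> m" and "1 \<le> k" and "k \<le> 2 ^ (n+m-1)" and "0 < \<theta>"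
  shows "AE \<omega> in M. BCE M B H \<delta> \<rho> n \<omega> \<longrightarrow>
           Xi M B n m k \<theta> \<omega> \<le>
             exp ((\<rho> * ell H \<delta> (n+m) * \<theta> + \<theta>\<^sup>2 * 2 powr (- 2 * real (n+m) * H)) / 2)"
proof -
  interpret fbm_unit M B H
    using assms(1) by unfold_locales
  obtain v where v: "v \<le> 2 powr (- 2 * real (n + m) * H)"
    and Xi: "AE \<omega> in M. Xi M B n m k \<theta> \<omega> = exp (\<theta> * mu_cond M B n m k \<omega> + \<theta>\<^sup>2 * v / 2)"
    using Xi_eq_exp_mu_cond[OF assms(8-10)] by metis
  show ?thesis
    using Xi
  proof eventually_elim
    case (elim \<omega>)
    show ?case
    proof
      assume "BCE M B H \<delta> \<rho> n \<omega>"
      then have "\<bar>mu_cond M B n m k \<omega>\<bar> \<le> \<rho> / 2 * ell H \<delta> (n + m)"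
        using assms(8-10) unfolding BCE_def by blast
      then have "\<theta> * mu_cond M B n m k \<omega> \<le> \<theta> * (\<rho> / 2 * ell H \<delta> (n + m))"
        using \<open>0 < \<theta>\<close> by (intro mult_left_mono) (auto simp: abs_le_iff)
      moreover have "\<theta>\<^sup>2 * v \<le> \<theta>\<^sup>2 * 2 powr (- 2 * real (n + m) * H)"
        using v by (intro mult_left_mono) auto
      ultimately show "Xi M B n m k \<theta> \<omega> \<le> exp ((\<rho> * ell H \<delta> (n+m) * \<theta> + \<theta>\<^sup>2 * 2 powr (- 2 * real (n+m) * H)) / 2)"
        unfolding elim by (simp add: field_simps)
    qed
  qed
qed

end
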